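(* Let $R:\mathbb C^{\mathrm{op}}\to\mathbf{Grpd}$ be a directed restriction species and let $\mu$ be the Möbius function of the incidence algebra of the associated decomposition space $\mathbf R$. Then for every $R$-structure $Q=(P,X)$ (with $P$ a finite poset and $X\in R[P]$), \[ \mu(Q)=\begin{cases}(-1)^n & \text{if the underlying poset $P$ of $Q$ is discrete with $n$ elements},\\ 0&\text{otherwise.}\end{cases} \]
   Context: Let $\mathbb C$ be the category of finite posets and convex maps (maps which are isomorphisms onto a convex subposet, i.e. a subset $S$ such that $x\le y\le z$ with $x,z\in S$ implies $y\in S$). A directed restriction species is a functor $R:\mathbb C^{\mathrm{op}}\to\mathbf{Grpd}$; for a convex subposet $S\subseteq P$ and $X\in R[P]$ write $X|_S\in R[S]$ for the restriction. An $R$-structure is a pair $(P,X)$ with $P$ a finite poset and $X\in R[P]$; the groupoid $\mathbf R_1$ consists of $R$-structures. The associated decomposition space $\mathbf R$ has $\mathbf R_n$ the groupoid of $n$-layered finite posets (monotone maps $P\to\{1,\dots,n\}$) equipped with an $R$-structure on $P$. Its incidence algebra (after homotopy cardinality) consists of functions $\varphi$ from isomorphism classes of $R$-structures to $\mathbb Q$ with convolution \[(\varphi*\psi)(P,X)=\sum_{l:P\to\{1,2\}\text{ monotone}}\varphi\big(P_1,X|_{P_1}\big)\,\psi\big(P_2,X|_{P_2}\big),\quad P_i=l^{-1}(i),\] unit $\delta(P,X)=1$ if $P=\emptyset$ and $0$ otherwise; the Möbius function $\mu$ is the convolution inverse of the zeta function $\zeta\equiv1$. *)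

theory Defs
  imports Complex_Main "HOL-Library.FuncSet"
begin

definition fin_poset :: "'a set \<Rightarrow> 'a rel \<Rightarrow> bool" where
  "fin_poset S r \<longleftrightarrow> finite S \<and> partial_order_on S r"

definition restr_rel :: "'a rel \<Rightarrow> 'a set \<Rightarrow> 'a rel" where
  "restr_rel r T = r \<inter> (T \<times> T)"

definition convex_sub :: "'a set \<Rightarrow> 'a rel \<Rightarrow> 'a set \<Rightarrow> bool" where
  "convex_sub S r T \<longleftrightarrow> T \<subseteq> S \<and>
     (\<forall>x\<in>T. \<forall>y\<in>S. \<forall>z\<in>T. (x, y) \<in> r \<and> (y, z) \<in> r \<longrightarrow> y \<in> T)"

text \<open>A directed restriction species (object part): Rs S r is the set of
  R-structures on the poset (S, r); res S r T X is the restriction X|_T of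
  X \<in> Rs S r to a convex subposet T.\<close>
definition dir_restriction_species ::
  "('a set \<Rightarrow> 'a rel \<Rightarrow> 'x set) \<Rightarrow> ('a set \<Rightarrow> 'a rel \<Rightarrow> 'a set \<Rightarrow> 'x \<Rightarrow> 'x) \<Rightarrow> bool" where
  "dir_restriction_species Rs res \<longleftrightarrow>
     (\<forall>S r X T. fin_poset S r \<and> X \<in> Rs S r \<and> convex_sub S r T \<longrightarrow>
        res S r T X \<in> Rs T (restr_rel r T)) \<and>
     (\<forall>S r X. fin_poset S r \<and> X \<in> Rs S r \<longrightarrow> res S r S X = X) \<and>
     (\<forall>S r X T U. fin_poset S r \<and> X \<in> Rs S r \<and> convex_sub S r T \<and>
        convex_sub T (restr_rel r T) U \<longrightarrow>
        res T (restr_rel r T) U (res S r T X) = res S r U X)"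

definition mono_2layer :: "'a set \<Rightarrow> 'a rel \<Rightarrow> ('a \<Rightarrow> nat) set" where
  "mono_2layer S r = {l \<in> S \<rightarrow>\<^sub>E {1, 2}. \<forall>x\<in>S. \<forall>y\<in>S. (x, y) \<in> r \<longrightarrow> l x \<le> l y}"

definition conv ::
  "('a set \<Rightarrow> 'a rel \<Rightarrow> 'a set \<Rightarrow> 'x \<Rightarrow> 'x) \<Rightarrow>
   ('a set \<Rightarrow> 'a rel \<Rightarrow> 'x \<Rightarrow> rat) \<Rightarrow> ('a set \<Rightarrow> 'a rel \<Rightarrow> 'x \<Rightarrow> rat) \<Rightarrow>
   'a set \<Rightarrow> 'a rel \<Rightarrow> 'x \<Rightarrow> rat" where
  "conv res \<phi> \<psi> S r X =
     (\<Sum>l\<in>mono_2layer S r.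
        (let P1 = {x\<in>S. l x = 1}; P2 = {x\<in>S. l x = 2} in
          \<phi> P1 (restr_rel r P1) (res S r P1 X) * \<psi> P2 (restr_rel r P2) (res S r P2 X)))"

definition zeta_fn :: "'a set \<Rightarrow> 'a rel \<Rightarrow> 'x \<Rightarrow> rat" where
  "zeta_fn S r X = 1"

definition delta_fn :: "'a set \<Rightarrow> 'a rel \<Rightarrow> 'x \<Rightarrow> rat" where
  "delta_fn S r X = (if S = {} then 1 else 0)"

definition is_moebius ::
  "('a set \<Rightarrow> 'a rel \<Rightarrow> 'x set) \<Rightarrow> ('a set \<Rightarrow> 'a rel \<Rightarrow> 'a set \<Rightarrow> 'x \<Rightarrow> 'x) \<Rightarrow>
   ('a set \<Rightarrow> 'a rel \<Rightarrow> 'x \<Rightarrow> rat) \<Rightarrow> bool" where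
  "is_moebius Rs res \<mu> \<longleftrightarrow>
     (\<forall>S r X. fin_poset S r \<and> X \<in> Rs S r \<longrightarrow>
        conv res \<mu> zeta_fn S r X = delta_fn S r X \<and>
        conv res zeta_fn \<mu> S r X = delta_fn S r X)"

end

theory Submission
  imports Defs
begin

text \<open>Identify a monotone 2-layering of P with its first layer D, a down-set of P. Then
  \<open>\<mu> * \<zeta> = \<delta>\<close> reads \<open>\<Sum>\<^sub>D \<mu>(D) = \<delta>(P)\<close>: the term D = P is \<open>\<mu>(P)\<close> itself and all other D are
  proper convex subposets, so this equation determines \<open>\<mu>\<close> by induction on |P|, whatever the
  R-structure. Hence it suffices that the sign function s, with \<open>s(D) = (-1)^|D|\<close> for discrete D
  and 0 otherwise, satisfies the same recursion. A down-set is discrete exactly when it consists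
  of minimal elements, so \<open>\<Sum>\<^sub>D s(D)\<close> is the alternating sum over all subsets of the set of
  minimal elements of P, which vanishes unless P is empty.\<close>

definition down_sets :: "'a set \<Rightarrow> 'a rel \<Rightarrow> 'a set set" where
  "down_sets S r = {D. D \<subseteq> S \<and> (\<forall>x\<in>S. \<forall>y\<in>D. (x, y) \<in> r \<longrightarrow> x \<in> D)}"

definition minimals :: "'a set \<Rightarrow> 'a rel \<Rightarrow> 'a set" where
  "minimals S r = {m\<in>S. \<forall>x\<in>S. (x, m) \<in> r \<longrightarrow> x = m}"

definition discrete_sign :: "'a set \<Rightarrow> 'a rel \<Rightarrow> rat" where
  "discrete_sign S r = (if r = Id_on S then (-1) ^ card S else 0)"

lemma fin_posetD:
  assumes "fin_poset S r"
  shows "finite S" "refl_on S r" "trans r" "antisym r" "r \<subseteq> S \<times> S"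
  using assms partial_order_onD unfolding fin_poset_def by blast+

lemma fin_poset_restr_rel:
  assumes "fin_poset S r" "T \<subseteq> S"
  shows "fin_poset T (restr_rel r T)"
  using assms finite_subset
  unfolding fin_poset_def partial_order_on_def preorder_on_def restr_rel_def
    refl_on_def trans_def antisym_def
  by blast

lemma down_set_convex: "D \<in> down_sets S r \<Longrightarrow> convex_sub S r D"
  unfolding down_sets_def convex_sub_def by blast

lemma finite_down_sets: "finite S \<Longrightarrow> finite (down_sets S r)"
  unfolding down_sets_def by (rule finite_subset[of _ "Pow S"]) auto

lemma bij_betw_mono_2layer_down_sets:
  "bij_betw (\<lambda>l. {x\<in>S. l x = 1}) (mono_2layer S r) (down_sets S r)"
proof (rule bij_betw_byWitness[where f' = "\<lambda>D. \<lambda>x\<in>S. if x \<in> D then 1 else 2"])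
  have l_values: "l \<in> S \<rightarrow>\<^sub>E {1, 2}"
    and l_mono: "\<And>x y. x \<in> S \<Longrightarrow> y \<in> S \<Longrightarrow> (x, y) \<in> r \<Longrightarrow> l x \<le> l y"
    if "l \<in> mono_2layer S r" for l
    using that unfolding mono_2layer_def by blast+
  show "\<forall>l\<in>mono_2layer S r. (\<lambda>x\<in>S. if x \<in> {x\<in>S. l x = 1} then 1 else 2) = l"
  proof
    fix l assume "l \<in> mono_2layer S r"
    with l_values[OF this] show "(\<lambda>x\<in>S. if x \<in> {x\<in>S. l x = 1} then 1 else 2) = l"
      by (intro ext) (auto simp: PiE_iff extensional_def)
  qed
  show "\<forall>D\<in>down_sets S r. {x\<in>S. (\<lambda>x\<in>S. if x \<in> D then 1 else 2) x = (1::nat)} = D"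
    unfolding down_sets_def by auto
  have "{x\<in>S. l x = 1} \<in> down_sets S r" if l: "l \<in> mono_2layer S r" for l
  proof -
    have "l x = 1" if "x \<in> S" "y \<in> S" "(x, y) \<in> r" "l y = 1" for x y
      using l_values[OF l] l_mono[OF l that(1-3)] that by (fastforce simp: PiE_iff)
    then show ?thesis
      unfolding down_sets_def by blast
  qed
  then show "(\<lambda>l. {x\<in>S. l x = 1}) ` mono_2layer S r \<subseteq> down_sets S r"
    by blast
  show "(\<lambda>D. \<lambda>x\<in>S. if x \<in> D then 1 else 2) ` down_sets S r \<subseteq> mono_2layer S r"
    unfolding mono_2layer_def down_sets_def by (auto; meson)
qed

lemma conv_eq_sum_down_sets:
  "conv res \<phi> \<psi> S r X =
     (\<Sum>D\<in>down_sets S r. \<phi> D (restr_rel r D) (res S r D X) *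
        \<psi> (S - D) (restr_rel r (S - D)) (res S r (S - D) X))"
proof -
  have "{x\<in>S. l x = 2} = S - {x\<in>S. l x = 1}" if "l \<in> mono_2layer S r" for l
    using that unfolding mono_2layer_def by fastforce
  then show ?thesis
    unfolding conv_def Let_def
    by (simp add: sum.reindex_bij_betw[OF bij_betw_mono_2layer_down_sets, symmetric] cong: sum.cong)
qed

lemma conv_zeta_split:
  assumes "dir_restriction_species Rs res" "fin_poset S r" "X \<in> Rs S r"
  shows "conv res \<phi> zeta_fn S r X =
           \<phi> S r X + (\<Sum>D\<in>down_sets S r - {S}. \<phi> D (restr_rel r D) (res S r D X))"
proof -
  have "restr_rel r S = r"
    using fin_posetD(5)[OF assms(2)] unfolding restr_rel_def by blast
  moreover have "res S r S X = X"
    using assms unfolding dir_restriction_species_def by blast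
  moreover have "S \<in> down_sets S r" "finite (down_sets S r)"
    using finite_down_sets[OF fin_posetD(1)[OF assms(2)]] unfolding down_sets_def by auto
  ultimately show ?thesis
    unfolding conv_eq_sum_down_sets zeta_fn_def by (simp add: sum.remove)
qed

lemma zeta_left_inverse_unique:
  assumes species: "dir_restriction_species Rs res"
    and \<phi>: "\<And>S r X. fin_poset S r \<Longrightarrow> X \<in> Rs S r \<Longrightarrow> conv res \<phi> zeta_fn S r X = delta_fn S r X"
    and \<psi>: "\<And>S r X. fin_poset S r \<Longrightarrow> X \<in> Rs S r \<Longrightarrow> conv res \<psi> zeta_fn S r X = delta_fn S r X"
    and "fin_poset S r" "X \<in> Rs S r"
  shows "\<phi> S r X = \<psi> S r X"
  using assms(4,5)
proof (induction "card S" arbitrary: S r X rule: less_induct)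
  case less
  have "\<phi> D (restr_rel r D) (res S r D X) = \<psi> D (restr_rel r D) (res S r D X)"
    if D: "D \<in> down_sets S r - {S}" for D
  proof (rule less.hyps)
    have "D \<subset> S" using D unfolding down_sets_def by blast
    then show "card D < card S"
      using less.prems(1) by (simp add: fin_poset_def psubset_card_mono)
    show "fin_poset D (restr_rel r D)"
      using fin_poset_restr_rel less.prems(1) \<open>D \<subset> S\<close> by blast
    show "res S r D X \<in> Rs D (restr_rel r D)"
      using species less.prems D down_set_convex unfolding dir_restriction_species_def by blast
  qed
  then have "conv res \<phi> zeta_fn S r X - \<phi> S r X = conv res \<psi> zeta_fn S r X - \<psi> S r X"
    using conv_zeta_split[OF species less.prems] sum.cong[OF refl, of "down_sets S r - {S}"] by simp
  then show ?case
    using \<phi> \<psi> less.prems by simp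
qed

lemma minimals_nonempty:
  assumes "fin_poset S r" "S \<noteq> {}"
  shows "minimals S r \<noteq> {}"
proof -
  note po = fin_posetD[OF assms(1)]
  have "wf (r - Id)"
  proof (rule wf_finite_segments)
    show "irrefl (r - Id)" by (simp add: irrefl_def)
    show "trans (r - Id)"
      using po(3,4) unfolding trans_def antisym_def by blast
    show "finite {y. (y, x) \<in> r - Id}" for x
      using po(5) by (intro finite_subset[OF _ po(1)]) blast
  qed
  moreover obtain x where "x \<in> S"
    using assms(2) by blast
  ultimately obtain m where "m \<in> S" "\<And>y. (y, m) \<in> r - Id \<Longrightarrow> y \<notin> S"
    by (rule wfE_min) blast
  then have "m \<in> minimals S r"
    unfolding minimals_def by blast
  then show ?thesis by blast
qed

lemma discrete_down_sets_eq_Pow_minimals: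
  assumes "fin_poset S r"
  shows "{D\<in>down_sets S r. restr_rel r D = Id_on D} = Pow (minimals S r)"
proof (intro set_eqI iffI)
  fix D assume "D \<in> {D\<in>down_sets S r. restr_rel r D = Id_on D}"
  then have "D \<subseteq> S" and down: "\<And>x y. x \<in> S \<Longrightarrow> y \<in> D \<Longrightarrow> (x, y) \<in> r \<Longrightarrow> x \<in> D"
    and discrete: "restr_rel r D = Id_on D"
    unfolding down_sets_def by blast+
  have "x = y" if "x \<in> S" "y \<in> D" "(x, y) \<in> r" for x y
  proof -
    have "(x, y) \<in> restr_rel r D"
      using that down unfolding restr_rel_def by blast
    then show ?thesis
      using discrete by (simp add: Id_on_iff)
  qed
  then show "D \<in> Pow (minimals S r)"
    using \<open>D \<subseteq> S\<close> unfolding minimals_def by blast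
next
  fix D assume "D \<in> Pow (minimals S r)"
  then have "D \<subseteq> S" and minimal: "\<And>x y. y \<in> D \<Longrightarrow> x \<in> S \<Longrightarrow> (x, y) \<in> r \<Longrightarrow> x = y"
    unfolding minimals_def by blast+
  then have "D \<in> down_sets S r"
    unfolding down_sets_def by blast
  moreover have "restr_rel r D = Id_on D"
    using \<open>D \<subseteq> S\<close> minimal fin_posetD(2,5)[OF assms]
    unfolding restr_rel_def refl_on_def by (auto simp: Id_on_iff)
  ultimately show "D \<in> {D\<in>down_sets S r. restr_rel r D = Id_on D}"
    by blast
qed

lemma sum_Pow_neg_one_power_card:
  assumes "finite A" "A \<noteq> {}"
  shows "(\<Sum>T\<in>Pow A. (-1) ^ card T) = (0::'b::ring_1)"
proof (rule sum_alternating_cancels)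
  have "{} \<subset> A" using assms(2) by blast
  then show "card {T. T \<in> Pow A \<and> even (card T)} = card {T. T \<in> Pow A \<and> odd (card T)}"
    using card_subsupersets_even_odd[OF assms(1) \<open>{} \<subset> A\<close>] by (simp add: Pow_def)
qed (simp add: assms(1))

lemma sum_discrete_sign_down_sets:
  assumes "fin_poset S r"
  shows "(\<Sum>D\<in>down_sets S r. discrete_sign D (restr_rel r D)) = (if S = {} then 1 else 0)"
proof -
  have "finite S"
    using fin_posetD(1)[OF assms] .
  have "(\<Sum>D\<in>down_sets S r. discrete_sign D (restr_rel r D))
      = (\<Sum>D\<in>{D\<in>down_sets S r. restr_rel r D = Id_on D}. (-1) ^ card D)"
    unfolding discrete_sign_def by (simp add: sum.inter_filter finite_down_sets \<open>finite S\<close>)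
  also have "\<dots> = (\<Sum>D\<in>Pow (minimals S r). (-1) ^ card D)"
    using discrete_down_sets_eq_Pow_minimals[OF assms] by simp
  also have "\<dots> = (if S = {} then 1 else 0)"
    using minimals_nonempty[OF assms] sum_Pow_neg_one_power_card[of "minimals S r"] \<open>finite S\<close>
    by (auto simp: minimals_def)
  finally show ?thesis .
qed

lemma conv_discrete_sign_zeta:
  "fin_poset S r \<Longrightarrow> conv res (\<lambda>S r X. discrete_sign S r) zeta_fn S r X = delta_fn S r X"
  unfolding conv_eq_sum_down_sets zeta_fn_def delta_fn_def by (simp add: sum_discrete_sign_down_sets)

theorem corollary3p5:
  fixes Rs :: "'a set \<Rightarrow> 'a rel \<Rightarrow> 'x set"
    and res :: "'a set \<Rightarrow> 'a rel \<Rightarrow> 'a set \<Rightarrow> 'x \<Rightarrow> 'x"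
    and \<mu> :: "'a set \<Rightarrow> 'a rel \<Rightarrow> 'x \<Rightarrow> rat"
  assumes "dir_restriction_species Rs res"
    and "is_moebius Rs res \<mu>"
    and "fin_poset P r" and "X \<in> Rs P r"
  shows "\<mu> P r X = (if r = Id_on P then (-1) ^ card P else 0)"
proof -
  have "\<mu> P r X = discrete_sign P r"
    using zeta_left_inverse_unique[OF assms(1) _ conv_discrete_sign_zeta assms(3,4)] assms(2)
    unfolding is_moebius_def by blast
  then show ?thesis
    unfolding discrete_sign_def .
qed

end
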